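(* For $n\ge1$ let $a_n$ be the number of equivalence classes of period configurations of Parallel Diffusion on the unlabelled complete graph $K_n$. Then $a_1=1$, $a_2=2$, $a_3=6$, $a_4=19$, and $a_n=5a_{n-1}-7a_{n-2}+4a_{n-3}$ for all $n\ge5$.
   Context: Parallel Diffusion on a graph $G$: a configuration assigns an integer stack size $|v|$ to each vertex. One firing step replaces every stack size simultaneously by $|v| + \#\{u\in N(v): |u|>|v|\} - \#\{u\in N(v): |u|<|v|\}$. A period configuration is a configuration $D$ such that repeated firing starting from $D$ returns to $D$ after some positive number of steps. On the complete graph $K_n$ with unlabelled vertices, a configuration is a multiset of $n$ integers. Two configurations are equivalent if one is obtained from the other by adding the same integer to every stack size. *)

theory Defs
  imports Main "HOL-Library.Multiset"
begin

text \<open>A configuration is a multiset of n integers (stack sizes).  In K_n every other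
  vertex is a neighbour; vertices with equal stack size contribute nothing, so
  counting over the whole multiset is the same as counting over the neighbours.\<close>

definition pd_fire :: "int multiset \<Rightarrow> int multiset" where
  "pd_fire M = image_mset
     (\<lambda>x. x + int (size (filter_mset (\<lambda>y. y > x) M))
            - int (size (filter_mset (\<lambda>y. y < x) M))) M"

definition pd_period_config :: "int multiset \<Rightarrow> bool" where
  "pd_period_config D \<longleftrightarrow> (\<exists>k>0. (pd_fire ^^ k) D = D)"

definition pd_equiv :: "(int multiset \<times> int multiset) set" where
  "pd_equiv = {(M, N). \<exists>c::int. N = image_mset (\<lambda>x. x + c) M}"

definition pd_period_configs :: "nat \<Rightarrow> int multiset set" where
  "pd_period_configs n = {D. size D = n \<and> pd_period_config D}"

definition pd_count :: "nat \<Rightarrow> nat" where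
  "pd_count n = card (pd_period_configs n // pd_equiv)"

end

theory Submission
  imports Defs "HOL-Computational_Algebra.Formal_Power_Series"
begin

text \<open>A stack of size u fires to u + d u, where d u = drift M u is the number of larger minus the
  number of smaller stacks. If one firing merges no two distinct sizes, then over two firings the
  potential, the sum of (a - b)^2 over all pairs, drops by 2n times the sum over all pairs of the
  defect |a - b| + |a' - b'| - |d a - d b| >= 0, where a' = a + d a. This rests on the identity
  3 (sum of (d u)^2) = n^3 - (sum of (count u)^2), whose right side sees only multiplicities.
  Along a periodic orbit neither the number of distinct sizes nor the potential can drop, so all
  defects vanish: one firing reverses the order of any two distinct sizes. Conversely such
  configurations have period 2.

  Normalising the minimum to 0 picks one configuration per class. Removing the m stacks of maximal
  size v from such a configuration leaves a smaller one D0, and v ranges over exactly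
  top_count D0 + m - 1 values, where top_count counts the maximal stacks. This yields a
  convolution system for the number a n of classes and the sum b n of top_count over them, whose
  generating function solution is A = x (1 - x)^3 / (1 - 5 x + 7 x^2 - 4 x^3).\<close>

unbundle fps_syntax

lemma sum_mset_subtractf:
  fixes f g :: "'a \<Rightarrow> 'b::ab_group_add"
  shows "(\<Sum>x\<in>#M. f x - g x) = (\<Sum>x\<in>#M. f x) - (\<Sum>x\<in>#M. g x)"
  by (induction M) auto

lemma sum_mset_negf:
  fixes f :: "'a \<Rightarrow> 'b::ab_group_add"
  shows "(\<Sum>x\<in>#M. - f x) = - (\<Sum>x\<in>#M. f x)"
  by (induction M) auto

lemma sum_mset_nonneg:
  fixes f :: "'a \<Rightarrow> 'b::ordered_comm_monoid_add"
  assumes "\<And>x. x \<in># M \<Longrightarrow> 0 \<le> f x"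
  shows "0 \<le> (\<Sum>x\<in>#M. f x)"
  using sum_mset_mono[of M "\<lambda>_. 0" f] assms by simp

lemma member_le_sum_mset:
  fixes f :: "'a \<Rightarrow> 'b::ordered_comm_monoid_add"
  assumes "\<And>x. x \<in># M \<Longrightarrow> 0 \<le> f x" "a \<in># M"
  shows "f a \<le> (\<Sum>x\<in>#M. f x)"
proof -
  obtain N where M: "M = add_mset a N"
    using multi_member_split[OF assms(2)] by blast
  have "0 \<le> (\<Sum>x\<in>#N. f x)"
    using assms(1) by (intro sum_mset_nonneg) (simp add: M)
  then show ?thesis
    by (simp add: M add_increasing2)
qed

lemma sum_mset_double_symmetrize:
  fixes f :: "'a \<Rightarrow> 'a \<Rightarrow> int"
  shows "2 * (\<Sum>a\<in>#M. \<Sum>b\<in>#M. f a b) = (\<Sum>a\<in>#M. \<Sum>b\<in>#M. f a b + f b a)"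
proof -
  have "(\<Sum>a\<in>#M. \<Sum>b\<in>#M. f b a) = (\<Sum>a\<in>#M. \<Sum>b\<in>#M. f a b)"
    by (rule sum_mset.swap)
  then show ?thesis
    by (simp only: sum_mset.distrib mult_2)
qed

lemma sum_mset_double_antisym:
  fixes f :: "'a \<Rightarrow> 'a \<Rightarrow> int"
  assumes "\<And>a b. f b a = - f a b"
  shows "(\<Sum>a\<in>#M. \<Sum>b\<in>#M. f a b) = 0"
proof -
  have "f a b + f b a = 0" for a b
    using assms[of a b] by simp
  then show ?thesis
    using sum_mset_double_symmetrize[of f M] by simp
qed

lemma sum_mset_double_product_diff:
  fixes f g :: "'a \<Rightarrow> int"
  shows "(\<Sum>a\<in>#M. \<Sum>b\<in>#M. (f a - f b) * (g a - g b))
    = 2 * int (size M) * (\<Sum>a\<in>#M. f a * g a) - 2 * (\<Sum>a\<in>#M. f a) * (\<Sum>a\<in>#M. g a)"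
proof -
  have diag_left: "(\<Sum>a\<in>#M. \<Sum>b\<in>#M. f a * g a) = int (size M) * (\<Sum>a\<in>#M. f a * g a)"
    by (simp add: sum_mset_distrib_left)
  have diag_right: "(\<Sum>a\<in>#M. \<Sum>b\<in>#M. f b * g b) = int (size M) * (\<Sum>a\<in>#M. f a * g a)"
    by simp
  have cross: "(\<Sum>a\<in>#M. \<Sum>b\<in>#M. f a * g b) = (\<Sum>a\<in>#M. f a) * (\<Sum>a\<in>#M. g a)"
    by (subst sum_mset.swap) (simp add: sum_mset_distrib_left sum_mset_distrib_right)
  have cross': "(\<Sum>a\<in>#M. \<Sum>b\<in>#M. f b * g a) = (\<Sum>a\<in>#M. f a) * (\<Sum>a\<in>#M. g a)"
    by (simp add: sum_mset_distrib_left sum_mset_distrib_right)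
  have "(\<Sum>a\<in>#M. \<Sum>b\<in>#M. (f a - f b) * (g a - g b))
      = (\<Sum>a\<in>#M. \<Sum>b\<in>#M. f a * g a + f b * g b - f a * g b - f b * g a)"
    by (simp add: algebra_simps)
  also have "\<dots> = (\<Sum>a\<in>#M. \<Sum>b\<in>#M. f a * g a) + (\<Sum>a\<in>#M. \<Sum>b\<in>#M. f b * g b)
      - (\<Sum>a\<in>#M. \<Sum>b\<in>#M. f a * g b) - (\<Sum>a\<in>#M. \<Sum>b\<in>#M. f b * g a)"
    by (simp only: sum_mset.distrib sum_mset_subtractf)
  also have "\<dots> = 2 * int (size M) * (\<Sum>a\<in>#M. f a * g a) - 2 * (\<Sum>a\<in>#M. f a) * (\<Sum>a\<in>#M. g a)"
    unfolding diag_left diag_right cross cross' by simp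
  finally show ?thesis .
qed

lemma count_image_mset_inj_on:
  assumes "inj_on f (set_mset M)" "u \<in># M"
  shows "count (image_mset f M) (f u) = count M u"
proof -
  have "{x. x \<in># M \<and> f u = f x} = {u}"
    using assms by (auto dest: inj_onD)
  then show ?thesis
    by (simp add: count_image_mset')
qed

lemma sum_count_squared_image_mset:
  assumes "inj_on f (set_mset M)"
  shows "(\<Sum>u\<in>#image_mset f M. int (count (image_mset f M) u)^2) = (\<Sum>u\<in>#M. int (count M u)^2)"
  using count_image_mset_inj_on[OF assms]
  by (simp add: image_mset.compositionality o_def cong: image_mset_cong)

lemma sum_count_squared_add_mset:
  fixes M :: "'a multiset" and x :: 'a
  defines "c \<equiv> int (count M x)"
  shows "(\<Sum>u\<in>#add_mset x M. int (count (add_mset x M) u)^2)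
    = (\<Sum>u\<in>#M. int (count M u)^2) + (c + 1)^2 + c * (2 * c + 1)"
proof -
  have "(\<Sum>u\<in>#add_mset x M. int (count (add_mset x M) u)^2)
      = (c + 1)^2 + (\<Sum>u\<in>#M. int (count (add_mset x M) u)^2)"
    unfolding sum_mset.insert by (simp add: c_def)
  also have "\<dots> = (c + 1)^2 + (\<Sum>u\<in>#M. int (count M u)^2 + (if u = x then 2 * c + 1 else 0))"
    by (intro arg_cong2[where f = plus] refl arg_cong[where f = sum_mset] image_mset_cong)
      (auto simp: c_def power2_eq_square algebra_simps)
  also have "\<dots> = (\<Sum>u\<in>#M. int (count M u)^2) + (c + 1)^2 + c * (2 * c + 1)"
    by (simp add: sum_mset.distrib sum_mset_delta c_def)
  finally show ?thesis .
qed

lemma funpow_periodic: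
  assumes "(f ^^ k) x = x"
  shows "(f ^^ (t * k)) x = x"
  by (induction t) (simp_all add: funpow_add assms)

lemma funpow_periodic_antitone_eq:
  fixes \<mu> :: "'a \<Rightarrow> 'b::order"
  assumes "0 < k" "(f ^^ k) x = x" and antitone: "\<And>t. \<mu> ((f ^^ Suc t) x) \<le> \<mu> ((f ^^ t) x)"
  shows "\<mu> ((f ^^ t) x) = \<mu> x"
proof -
  have decreasing: "\<mu> ((f ^^ (t + d)) x) \<le> \<mu> ((f ^^ t) x)" for t d
  proof (induction d)
    case (Suc d)
    show ?case
      using order_trans[OF antitone[of "t + d"] Suc.IH] by simp
  qed simp
  have "\<mu> x = \<mu> ((f ^^ (t + (t * k - t))) x)"
    using assms(1) funpow_periodic[OF assms(2), of t] by simp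
  also have "\<dots> \<le> \<mu> ((f ^^ t) x)"
    by (rule decreasing)
  finally show ?thesis
    using decreasing[of 0 t] by simp
qed

section \<open>Drift and the potential\<close>

definition drift :: "int multiset \<Rightarrow> int \<Rightarrow> int" where
  "drift M u = (\<Sum>z\<in>#M. sgn (z - u))"

definition fire_at :: "int multiset \<Rightarrow> int \<Rightarrow> int" where
  "fire_at M u = u + drift M u"

lemma pd_fire_eq_image_mset: "pd_fire M = image_mset (fire_at M) M"
proof -
  have count_diff: "int (size {#y \<in># N. u < y#}) - int (size {#y \<in># N. y < u#}) = drift N u" for N u
    unfolding drift_def by (induction N) auto
  show ?thesis
    unfolding pd_fire_def fire_at_def
  proof (rule image_mset_cong)
    fix u
    show "u + int (size {#y \<in># M. u < y#}) - int (size {#y \<in># M. y < u#}) = u + drift M u"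
      using count_diff[of u M] by linarith
  qed
qed

lemma abs_drift_le: "\<bar>drift M u\<bar> \<le> int (size M)"
  unfolding drift_def by (induction M) (auto simp: sgn_if)

lemma drift_at_upper_bound:
  assumes "\<forall>z\<in>#M. z \<le> w"
  shows "drift M w = int (count M w) - int (size M)"
  using assms unfolding drift_def by (induction M) (auto simp: sgn_if)

lemma drift_add_replicate:
  "drift (M + replicate_mset m v) u = drift M u + int m * sgn (v - u)"
  by (simp add: drift_def)

lemma drift_less:
  assumes "a \<in># M" "a < b"
  shows "drift M b < drift M a"
proof -
  obtain N where M: "M = add_mset a N"
    using multi_member_split[OF assms(1)] by blast
  have "drift N b \<le> drift N a"
    unfolding drift_def by (rule sum_mset_mono) (use assms(2) in \<open>auto simp: sgn_if\<close>)
  then show ?thesis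
    using assms(2) by (simp add: M drift_def)
qed

lemma sum_drift: "(\<Sum>u\<in>#M. drift M u) = 0"
proof -
  have sgn_antisym: "sgn (a - b) = - sgn (b - a)" for a b :: int
    by (cases a b rule: linorder_cases) auto
  show ?thesis
    unfolding drift_def by (rule sum_mset_double_antisym) (rule sgn_antisym)
qed

lemma sum_mul_drift: "2 * (\<Sum>u\<in>#M. u * drift M u) = - (\<Sum>a\<in>#M. \<Sum>b\<in>#M. \<bar>a - b\<bar>)"
proof -
  have "a * sgn (b - a) + b * sgn (a - b) = - \<bar>a - b\<bar>" for a b :: int
    by (cases a b rule: linorder_cases) auto
  then show ?thesis
    using sum_mset_double_symmetrize[of "\<lambda>a b. a * sgn (b - a)" M]
    by (simp add: drift_def sum_mset_distrib_left sum_mset_negf)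
qed

lemma sum_abs_drift_diff:
  "(\<Sum>a\<in>#M. \<Sum>b\<in>#M. \<bar>drift M a - drift M b\<bar>) = 2 * (\<Sum>u\<in>#M. (drift M u)^2)"
proof -
  let ?d = "drift M"
  have "\<bar>?d a - ?d b\<bar> = sgn (b - a) * ?d a + sgn (a - b) * ?d b" if "a \<in># M" "b \<in># M" for a b
    using drift_less[OF that(1), of b] drift_less[OF that(2), of a]
    by (cases a b rule: linorder_cases) auto
  then have "(\<Sum>a\<in>#M. \<Sum>b\<in>#M. \<bar>?d a - ?d b\<bar>)
      = (\<Sum>a\<in>#M. \<Sum>b\<in>#M. sgn (b - a) * ?d a + sgn (a - b) * ?d b)"
    by (simp cong: image_mset_cong)
  also have "\<dots> = 2 * (\<Sum>a\<in>#M. \<Sum>b\<in>#M. sgn (b - a) * ?d a)"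
    by (rule sum_mset_double_symmetrize[symmetric])
  also have "\<dots> = 2 * (\<Sum>u\<in>#M. (?d u)^2)"
    by (simp add: drift_def power2_eq_square sum_mset_distrib_right)
  finally show ?thesis .
qed

lemma sum_drift_squared_add_max:
  assumes "\<forall>y\<in>#M. y \<le> x"
  defines "c \<equiv> int (count M x)" and "n \<equiv> int (size M)"
  shows "(\<Sum>u\<in>#add_mset x M. (drift (add_mset x M) u)^2)
    = (\<Sum>u\<in>#M. (drift M u)^2) + (c - n)^2 + n - c * (2 * (c - n) + 1)"
proof -
  have drift_x: "drift (add_mset x M) x = c - n"
    using drift_at_upper_bound[OF assms(1)] by (simp add: drift_def c_def n_def)
  have drift_sq: "(drift (add_mset x M) u)^2
      = (drift M u)^2 + 2 * drift M u + 1 - (if u = x then 2 * (c - n) + 1 else 0)"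
    if "u \<in># M" for u
  proof -
    have "drift (add_mset x M) u = drift M u + (if u = x then 0 else 1)"
      using assms(1) that by (force simp: drift_def sgn_if)
    then show ?thesis
      using drift_x by (simp add: drift_def power2_eq_square algebra_simps)
  qed
  have "(\<Sum>u\<in>#add_mset x M. (drift (add_mset x M) u)^2)
      = (c - n)^2
        + (\<Sum>u\<in>#M. (drift M u)^2 + 2 * drift M u + 1 - (if u = x then 2 * (c - n) + 1 else 0))"
    unfolding sum_mset.insert drift_x by (simp add: drift_sq cong: image_mset_cong)
  also have "\<dots> = (\<Sum>u\<in>#M. (drift M u)^2) + (c - n)^2 + n - c * (2 * (c - n) + 1)"
    by (simp add: sum_mset_subtractf sum_mset.distrib sum_mset_distrib_left[symmetric] sum_drift
        sum_mset_delta n_def c_def)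
  finally show ?thesis .
qed

lemma sum_drift_squared:
  "3 * (\<Sum>u\<in>#M. (drift M u)^2) = int (size M)^3 - (\<Sum>u\<in>#M. int (count M u)^2)"
proof (induction M rule: multiset_induct_max)
  case empty
  show ?case
    by (simp add: drift_def)
next
  case (add x M)
  show ?case
    unfolding sum_drift_squared_add_max[OF add.hyps] sum_count_squared_add_mset
    using add.IH by (simp add: power2_eq_square power3_eq_cube algebra_simps)
qed

definition potential :: "int multiset \<Rightarrow> int" where
  "potential M = (\<Sum>a\<in>#M. \<Sum>b\<in>#M. (a - b)^2)"

lemma potential_pd_fire:
  "potential (pd_fire M) = potential M - 2 * int (size M) * (\<Sum>a\<in>#M. \<Sum>b\<in>#M. \<bar>a - b\<bar>)
     + 2 * int (size M) * (\<Sum>u\<in>#M. (drift M u)^2)"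
proof -
  let ?d = "drift M"
  have square: "((a - b) + (x - y))^2 = (a - b)^2 + 2 * ((a - b) * (x - y)) + (x - y) * (x - y)"
    for a b x y :: int
    by (simp add: power2_eq_square algebra_simps)
  have "potential (pd_fire M) = (\<Sum>a\<in>#M. \<Sum>b\<in>#M. ((a - b) + (?d a - ?d b))^2)"
    by (simp add: potential_def pd_fire_eq_image_mset fire_at_def image_mset.compositionality
        o_def algebra_simps)
  also have "\<dots> = potential M + 2 * (\<Sum>a\<in>#M. \<Sum>b\<in>#M. (a - b) * (?d a - ?d b))
      + (\<Sum>a\<in>#M. \<Sum>b\<in>#M. (?d a - ?d b) * (?d a - ?d b))"
    by (simp only: square potential_def sum_mset.distrib sum_mset_distrib_left[symmetric])
  also have "\<dots> = potential M - 2 * int (size M) * (\<Sum>a\<in>#M. \<Sum>b\<in>#M. \<bar>a - b\<bar>)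
      + 2 * int (size M) * (\<Sum>u\<in>#M. (?d u)^2)"
    using sum_mset_double_product_diff[of "\<lambda>a. a" "?d" M] sum_mset_double_product_diff[of ?d ?d M]
      sum_mul_drift[of M]
    by (simp add: sum_drift power2_eq_square algebra_simps)
  finally show ?thesis .
qed

lemma potential_pd_fire_twice:
  assumes "inj_on (fire_at M) (set_mset M)"
  shows "potential (pd_fire (pd_fire M)) = potential M - 2 * int (size M) *
    (\<Sum>a\<in>#M. \<Sum>b\<in>#M. \<bar>a - b\<bar> + \<bar>fire_at M a - fire_at M b\<bar> - \<bar>drift M a - drift M b\<bar>)"
proof -
  let ?N = "pd_fire M"
  have N: "?N = image_mset (fire_at M) M"
    by (rule pd_fire_eq_image_mset)
  have "3 * (\<Sum>u\<in>#?N. (drift ?N u)^2) = 3 * (\<Sum>u\<in>#M. (drift M u)^2)"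
    unfolding sum_drift_squared N sum_count_squared_image_mset[OF assms] by simp
  then have same_drift: "(\<Sum>u\<in>#?N. (drift ?N u)^2) = (\<Sum>u\<in>#M. (drift M u)^2)"
    by simp
  have spread: "(\<Sum>a\<in>#?N. \<Sum>b\<in>#?N. \<bar>a - b\<bar>) = (\<Sum>a\<in>#M. \<Sum>b\<in>#M. \<bar>fire_at M a - fire_at M b\<bar>)"
    by (simp add: N image_mset.compositionality o_def)
  show ?thesis
    using potential_pd_fire[of ?N] potential_pd_fire[of M] sum_abs_drift_diff[of M]
    unfolding same_drift spread
    by (simp add: N sum_mset.distrib sum_mset_subtractf algebra_simps)
qed

definition fire_reverses_order :: "int multiset \<Rightarrow> bool" where
  "fire_reverses_order M \<longleftrightarrow> (\<forall>a\<in>#M. \<forall>b\<in>#M. a < b \<longrightarrow> fire_at M b < fire_at M a)"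

lemma potential_pd_fire_twice_le:
  assumes "inj_on (fire_at M) (set_mset M)"
  shows "potential (pd_fire (pd_fire M)) \<le> potential M"
proof -
  have "0 \<le> \<bar>a - b\<bar> + \<bar>fire_at M a - fire_at M b\<bar> - \<bar>drift M a - drift M b\<bar>" for a b
    unfolding fire_at_def by linarith
  then show ?thesis
    unfolding potential_pd_fire_twice[OF assms] by (simp add: sum_mset_nonneg)
qed

lemma potential_pd_fire_twice_less:
  assumes inj: "inj_on (fire_at M) (set_mset M)" and not_rev: "\<not> fire_reverses_order M"
  shows "potential (pd_fire (pd_fire M)) < potential M"
proof -
  let ?T = "\<lambda>a b. \<bar>a - b\<bar> + \<bar>fire_at M a - fire_at M b\<bar> - \<bar>drift M a - drift M b\<bar>"
  have T_nonneg: "0 \<le> ?T a b" for a b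
    unfolding fire_at_def by linarith
  obtain a b where ab: "a \<in># M" "b \<in># M" "a < b" and "\<not> fire_at M b < fire_at M a"
    using not_rev unfolding fire_reverses_order_def by blast
  moreover have "fire_at M a \<noteq> fire_at M b"
    using inj ab by (auto dest: inj_onD)
  ultimately have "0 < ?T a b"
    using drift_less[OF ab(1,3)] unfolding fire_at_def by linarith
  also have "\<dots> \<le> (\<Sum>b'\<in>#M. ?T a b')"
    using T_nonneg ab(2) by (rule member_le_sum_mset)
  also have "\<dots> \<le> (\<Sum>a'\<in>#M. \<Sum>b'\<in>#M. ?T a' b')"
    using T_nonneg ab(1)
    by (intro member_le_sum_mset[where f = "\<lambda>a'. \<Sum>b'\<in>#M. ?T a' b'"] sum_mset_nonneg)
  finally have "0 < (\<Sum>a'\<in>#M. \<Sum>b'\<in>#M. ?T a' b')" .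
  moreover have "0 < size M"
    using ab(1) by (cases M) auto
  ultimately show ?thesis
    unfolding potential_pd_fire_twice[OF inj] by simp
qed

section \<open>Period configurations\<close>

lemma pd_fire_twice_if_reverses:
  assumes "fire_reverses_order M"
  shows "pd_fire (pd_fire M) = M"
proof -
  have fire_back: "fire_at (pd_fire M) (fire_at M u) = u" if "u \<in># M" for u
  proof -
    have "sgn (fire_at M z - fire_at M u) = - sgn (z - u)" if "z \<in># M" for z
      using assms that \<open>u \<in># M\<close> unfolding fire_reverses_order_def
      by (cases u z rule: linorder_cases) (fastforce simp: sgn_if)+
    then have "drift (pd_fire M) (fire_at M u) = (\<Sum>z\<in>#M. - sgn (z - u))"
      by (simp add: drift_def pd_fire_eq_image_mset image_mset.compositionality o_def
          cong: image_mset_cong)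
    then show ?thesis
      by (simp add: fire_at_def[of "pd_fire M"] sum_mset_negf drift_def[of M] fire_at_def[of M])
  qed
  have "pd_fire (pd_fire M) = image_mset (\<lambda>u. fire_at (pd_fire M) (fire_at M u)) M"
    by (simp add: pd_fire_eq_image_mset image_mset.compositionality o_def)
  also have "\<dots> = M"
    using fire_back by (simp cong: image_mset_cong)
  finally show ?thesis .
qed

lemma card_set_mset_pd_fire_le: "card (set_mset (pd_fire M)) \<le> card (set_mset M)"
  by (simp add: pd_fire_eq_image_mset card_image_le)

lemma inj_on_fire_at_if_card_eq:
  assumes "card (set_mset (pd_fire M)) = card (set_mset M)"
  shows "inj_on (fire_at M) (set_mset M)"
  using assms by (intro eq_card_imp_inj_on) (simp_all add: pd_fire_eq_image_mset)

lemma reverses_if_pd_period_config: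
  assumes "pd_period_config M"
  shows "fire_reverses_order M"
proof (rule ccontr)
  assume not_rev: "\<not> fire_reverses_order M"
  obtain k where k: "0 < k" "(pd_fire ^^ k) M = M"
    using assms unfolding pd_period_config_def by blast
  have card_const: "card (set_mset ((pd_fire ^^ t) M)) = card (set_mset M)" for t
    using k by (rule funpow_periodic_antitone_eq) (simp add: card_set_mset_pd_fire_le)
  have inj: "inj_on (fire_at ((pd_fire ^^ t) M)) (set_mset ((pd_fire ^^ t) M))" for t
    using card_const[of "Suc t"] card_const[of t] by (intro inj_on_fire_at_if_card_eq) simp
  have "potential (((pd_fire ^^ 2) ^^ t) M) = potential M" for t
  proof (rule funpow_periodic_antitone_eq)
    show "0 < k"
      by (rule k(1))
    show "((pd_fire ^^ 2) ^^ k) M = M"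
      unfolding funpow_mult using funpow_periodic[OF k(2), of 2] by (simp add: mult.commute)
  next
    fix t
    have "(pd_fire ^^ (2 * Suc t)) M = pd_fire (pd_fire ((pd_fire ^^ (2 * t)) M))"
      by simp
    then show "potential (((pd_fire ^^ 2) ^^ Suc t) M) \<le> potential (((pd_fire ^^ 2) ^^ t) M)"
      unfolding funpow_mult using potential_pd_fire_twice_le[OF inj[of "2 * t"]] by simp
  qed
  from this[of 1] have "potential (pd_fire (pd_fire M)) = potential M"
    by (simp add: numeral_2_eq_2)
  moreover have "potential (pd_fire (pd_fire M)) < potential M"
    using inj[of 0] not_rev by (intro potential_pd_fire_twice_less) simp_all
  ultimately show False
    by simp
qed

lemma pd_period_config_iff_reverses: "pd_period_config M \<longleftrightarrow> fire_reverses_order M"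
proof
  assume "fire_reverses_order M"
  then have "(pd_fire ^^ 2) M = M"
    by (simp add: numeral_2_eq_2 pd_fire_twice_if_reverses)
  then show "pd_period_config M"
    unfolding pd_period_config_def by (intro exI[of _ 2]) simp
qed (rule reverses_if_pd_period_config)

section \<open>One configuration per class\<close>

lemma fire_at_shift: "fire_at (image_mset (\<lambda>x. x + c) M) (u + c) = fire_at M u + c"
  by (simp add: fire_at_def drift_def image_mset.compositionality o_def)

lemma fire_reverses_order_shift:
  "fire_reverses_order (image_mset (\<lambda>x. x + c) M) \<longleftrightarrow> fire_reverses_order M"
  by (auto simp: fire_reverses_order_def fire_at_shift)

lemma equiv_pd_equiv: "equiv UNIV pd_equiv"
proof (rule equivI)
  show "refl pd_equiv"
    by (auto simp: refl_on_def pd_equiv_def intro: exI[of _ 0])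
  show "sym pd_equiv"
    unfolding sym_def pd_equiv_def
  proof clarify
    fix D :: "int multiset" and c :: int
    show "\<exists>c'. D = image_mset (\<lambda>x. x + c') (image_mset (\<lambda>x. x + c) D)"
      by (intro exI[of _ "- c"]) (simp add: image_mset.compositionality o_def)
  qed
  show "trans pd_equiv"
    unfolding trans_def pd_equiv_def
  proof clarify
    fix D :: "int multiset" and c d :: int
    show "\<exists>e. image_mset (\<lambda>x. x + d) (image_mset (\<lambda>x. x + c) D) = image_mset (\<lambda>x. x + e) D"
      by (intro exI[of _ "c + d"]) (simp add: image_mset.compositionality o_def add.assoc)
  qed
qed simp

definition normal_period_configs :: "nat \<Rightarrow> int multiset set" where
  "normal_period_configs n =
     {D. size D = n \<and> fire_reverses_order D \<and> 0 \<in># D \<and> (\<forall>x\<in>#D. 0 \<le> x)}"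

lemma inj_on_pd_equiv_class_normal: "inj_on (\<lambda>D. pd_equiv `` {D}) (normal_period_configs n)"
proof (rule inj_onI)
  fix D E
  assume D: "D \<in> normal_period_configs n" and E: "E \<in> normal_period_configs n"
    and classes: "pd_equiv `` {D} = pd_equiv `` {E}"
  then obtain c where c: "E = image_mset (\<lambda>x. x + c) D"
    using eq_equiv_class[OF classes equiv_pd_equiv] by (auto simp: pd_equiv_def)
  obtain z where "z \<in># D" "z + c = 0"
    using E by (auto simp: c normal_period_configs_def)
  then have "c \<le> 0"
    using D by (auto simp: normal_period_configs_def)
  moreover have "0 \<le> c"
    using D E by (force simp: c normal_period_configs_def)
  ultimately show "D = E"
    by (simp add: c)
qed

lemma ex_normal_pd_equiv:
  assumes "D \<in> pd_period_configs n" "1 \<le> n"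
  shows "\<exists>E\<in>normal_period_configs n. (D, E) \<in> pd_equiv"
proof
  define c where "c = - Min_mset D"
  define E where "E = image_mset (\<lambda>x. x + c) D"
  have "D \<noteq> {#}"
    using assms by (auto simp: pd_period_configs_def)
  then have "0 \<in># E"
    unfolding E_def c_def by (metis Min_in_mset add.right_inverse image_eqI set_image_mset)
  moreover have "\<forall>x\<in>#E. 0 \<le> x"
    by (simp add: E_def c_def)
  ultimately show "E \<in> normal_period_configs n"
    using assms(1) by (simp add: E_def normal_period_configs_def pd_period_configs_def
        pd_period_config_iff_reverses fire_reverses_order_shift)
  show "(D, E) \<in> pd_equiv"
    by (auto simp: pd_equiv_def E_def)
qed

lemma bij_betw_normal_period_configs:
  assumes "1 \<le> n"
  shows "bij_betw (\<lambda>D. pd_equiv `` {D}) (normal_period_configs n) (pd_period_configs n // pd_equiv)"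
proof (rule bij_betw_imageI)
  show "inj_on (\<lambda>D. pd_equiv `` {D}) (normal_period_configs n)"
    by (rule inj_on_pd_equiv_class_normal)
  show "(\<lambda>D. pd_equiv `` {D}) ` normal_period_configs n = pd_period_configs n // pd_equiv"
  proof
    show "(\<lambda>D. pd_equiv `` {D}) ` normal_period_configs n \<subseteq> pd_period_configs n // pd_equiv"
      by (auto simp: normal_period_configs_def pd_period_configs_def pd_period_config_iff_reverses
          intro: quotientI)
    show "pd_period_configs n // pd_equiv \<subseteq> (\<lambda>D. pd_equiv `` {D}) ` normal_period_configs n"
    proof
      fix X
      assume "X \<in> pd_period_configs n // pd_equiv"
      then obtain D where D: "D \<in> pd_period_configs n" and X: "X = pd_equiv `` {D}"
        by (rule quotientE)
      then obtain E where "E \<in> normal_period_configs n" "(D, E) \<in> pd_equiv"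
        using ex_normal_pd_equiv assms by blast
      then show "X \<in> (\<lambda>D. pd_equiv `` {D}) ` normal_period_configs n"
        unfolding X using equiv_class_eq[OF equiv_pd_equiv] by blast
    qed
  qed
qed

lemma normal_period_config_le:
  assumes "D \<in> normal_period_configs n" "a \<in># D"
  shows "a \<le> 2 * int n"
proof (cases "a = 0")
  case False
  have D: "size D = n" "fire_reverses_order D" "0 \<in># D" "\<forall>x\<in>#D. 0 \<le> x"
    using assms(1) by (simp_all add: normal_period_configs_def)
  then have "fire_at D a < fire_at D 0"
    using assms(2) False unfolding fire_reverses_order_def by force
  then show ?thesis
    using abs_drift_le[of D a] abs_drift_le[of D 0] D(1) unfolding fire_at_def by linarith
qed simp

lemma finite_normal_period_configs: "finite (normal_period_configs n)"
proof (rule finite_subset)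
  show "normal_period_configs n \<subseteq> multisets_of_size {0..2 * int n} n"
    using normal_period_config_le
    by (fastforce simp: multisets_of_size_def normal_period_configs_def)
qed auto

lemma pd_count_eq_card_normal:
  assumes "1 \<le> n"
  shows "pd_count n = card (normal_period_configs n)"
  unfolding pd_count_def
  using bij_betw_same_card[OF bij_betw_normal_period_configs[OF assms]] by simp

lemma finite_pd_period_classes:
  assumes "1 \<le> n"
  shows "finite (pd_period_configs n // pd_equiv)"
  using bij_betw_finite[OF bij_betw_normal_period_configs[OF assms]] finite_normal_period_configs
  by blast

section \<open>Removing the block of maximal stacks\<close>

definition top_count :: "int multiset \<Rightarrow> nat" where
  "top_count D = count D (Max_mset D)"

definition top_heights :: "int multiset \<Rightarrow> nat \<Rightarrow> int set" where
  "top_heights D m = {Max_mset D + 1 ..< Max_mset D + int (top_count D) + int m}"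

lemma split_top_block:
  "D = {#z \<in># D. z < Max_mset D#} + replicate_mset (top_count D) (Max_mset D)"
proof (rule multiset_eqI)
  fix z
  show "count D z = count ({#z \<in># D. z < Max_mset D#} + replicate_mset (top_count D) (Max_mset D)) z"
  proof (cases z "Max_mset D" rule: linorder_cases)
    case greater
    then have "z \<notin># D"
      by (meson Max_ge finite_set_mset leD)
    then show ?thesis
      using greater by (simp add: not_in_iff)
  qed (simp_all add: top_count_def)
qed

lemma Max_mset_add_top_block:
  assumes "\<forall>z\<in>#D. z < v" "0 < m"
  shows "Max_mset (D + replicate_mset m v) = v" and "top_count (D + replicate_mset m v) = m"
proof -
  show max: "Max_mset (D + replicate_mset m v) = v"
    using assms by (intro Max_eqI) auto
  have "count D v = 0"
    using assms(1) by (auto simp flip: not_in_iff)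
  then show "top_count (D + replicate_mset m v) = m"
    unfolding top_count_def max by simp
qed

lemma top_count_bounds:
  assumes "D \<in> normal_period_configs n"
  shows "top_count D \<in> {1..n}"
proof -
  have "D \<noteq> {#}" "size D = n"
    using assms by (auto simp: normal_period_configs_def)
  then show ?thesis
    using count_le_size[of D "Max_mset D"] by (simp add: top_count_def Suc_le_eq)
qed

lemma fire_reverses_order_add_top_block:
  assumes "D \<noteq> {#}" "Max_mset D < v" "0 < m"
  shows "fire_reverses_order (D + replicate_mset m v) \<longleftrightarrow> fire_reverses_order D \<and> v \<in> top_heights D m"
proof -
  let ?E = "D + replicate_mset m v" and ?w = "Max_mset D"
  have below_v: "\<forall>z\<in>#D. z < v"
    using assms(2) by (meson Max_ge finite_set_mset le_less_trans)
  have fire_E: "fire_at ?E u = fire_at D u + int m" if "u \<in># D" for u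
    using below_v that by (simp add: fire_at_def drift_add_replicate)
  have "count D v = 0"
    using below_v by (auto simp flip: not_in_iff)
  then have fire_E_v: "fire_at ?E v = v - int (size D)"
    using drift_at_upper_bound[of D v] below_v by (force simp: fire_at_def drift_add_replicate)
  have fire_w: "fire_at D ?w = ?w + int (top_count D) - int (size D)"
    using drift_at_upper_bound[of D ?w] by (simp add: fire_at_def top_count_def)
  have "fire_reverses_order ?E \<longleftrightarrow>
      fire_reverses_order D \<and> (\<forall>a\<in>#D. v - int (size D) < fire_at D a + int m)"
    unfolding fire_reverses_order_def using below_v assms(3)
    by (auto simp: fire_E fire_E_v)
  also have "\<dots> \<longleftrightarrow> fire_reverses_order D \<and> v \<in> top_heights D m"
  proof -
    have "?w \<in># D"
      using assms(1) by simp
    moreover have "fire_at D ?w \<le> fire_at D a" if "fire_reverses_order D" "a \<in># D" for a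
    proof (cases "a = ?w")
      case False
      then have "a < ?w"
        using that(2) by (simp add: order.not_eq_order_implies_strict)
      then show ?thesis
        using that \<open>?w \<in># D\<close> unfolding fire_reverses_order_def by fastforce
    qed simp
    ultimately show ?thesis
      using fire_w assms(2) by (force simp: top_heights_def)
  qed
  finally show ?thesis .
qed

definition top_block_configs :: "nat \<Rightarrow> nat \<Rightarrow> int multiset set" where
  "top_block_configs n m = {D \<in> normal_period_configs n. top_count D = m}"

lemma add_top_block_mem_top_block_configs:
  assumes "0 < m" "D \<in> normal_period_configs k" "v \<in> top_heights D m"
  shows "D + replicate_mset m v \<in> top_block_configs (k + m) m"
proof -
  have D: "size D = k" "fire_reverses_order D" "0 \<in># D" "\<forall>x\<in>#D. 0 \<le> x"
    using assms(2) by (auto simp: normal_period_configs_def)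
  have v: "Max_mset D < v"
    using assms(3) by (simp add: top_heights_def)
  have "D \<noteq> {#}"
    using D(3) by auto
  have below_v: "\<forall>z\<in>#D. z < v"
    using v by (meson Max_ge finite_set_mset le_less_trans)
  have "fire_reverses_order (D + replicate_mset m v)"
    using fire_reverses_order_add_top_block[OF \<open>D \<noteq> {#}\<close> v assms(1)] D(2) assms(3) by simp
  moreover have "0 \<le> v"
    using D(3) below_v by fastforce
  ultimately show ?thesis
    using D Max_mset_add_top_block(2)[OF below_v assms(1)]
    by (auto simp: top_block_configs_def normal_period_configs_def)
qed

lemma top_block_configs_decompose:
  assumes "D \<in> top_block_configs n m" "m < n"
  defines "D0 \<equiv> {#z \<in># D. z < Max_mset D#}"
  shows "D0 \<in> normal_period_configs (n - m)" and "Max_mset D \<in> top_heights D0 m"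
proof -
  let ?w = "Max_mset D"
  have D: "size D = n" "fire_reverses_order D" "0 \<in># D" "\<forall>x\<in>#D. 0 \<le> x" "top_count D = m"
    using assms(1) by (auto simp: top_block_configs_def normal_period_configs_def)
  have "0 < m"
    using top_count_bounds assms(1) D(5) by (force simp: top_block_configs_def)
  have split: "D = D0 + replicate_mset m ?w"
    using split_top_block[of D] D(5) by (simp add: D0_def)
  have "size D = size D0 + m"
    by (subst split) simp
  then have size_D0: "size D0 = n - m"
    using D(1) by simp
  then have "D0 \<noteq> {#}"
    using assms(2) by auto
  have below_w: "\<forall>z\<in>#D0. z < ?w"
    by (simp add: D0_def)
  then have "Max_mset D0 < ?w"
    using \<open>D0 \<noteq> {#}\<close> by simp
  moreover have "fire_reverses_order (D0 + replicate_mset m ?w)"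
    using D(2) unfolding split[symmetric] .
  ultimately have rev0: "fire_reverses_order D0 \<and> ?w \<in> top_heights D0 m"
    using fire_reverses_order_add_top_block[OF \<open>D0 \<noteq> {#}\<close> _ \<open>0 < m\<close>] by simp
  then show "?w \<in> top_heights D0 m"
    by simp
  obtain z where "z \<in># D0"
    using \<open>D0 \<noteq> {#}\<close> by (meson multiset_nonemptyE)
  then have "z \<in># D" "z < ?w"
    by (simp_all add: D0_def)
  then have "0 < ?w"
    using D(4) by fastforce
  then have "0 \<in># D0"
    using D(3) by (simp add: D0_def)
  then show "D0 \<in> normal_period_configs (n - m)"
    using size_D0 rev0 D(4) by (simp add: normal_period_configs_def D0_def)
qed

lemma bij_betw_top_block_configs:
  assumes "0 < m" "m < n"
  shows "bij_betw (\<lambda>(D, v). D + replicate_mset m v)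
    (SIGMA D:normal_period_configs (n - m). top_heights D m) (top_block_configs n m)"
    (is "bij_betw ?f ?S _")
proof (rule bij_betw_imageI)
  have Max_add: "Max_mset (D + replicate_mset m v) = v" if "(D, v) \<in> ?S" for D v
    using that assms(1) by (intro Max_mset_add_top_block(1))
      (auto simp: top_heights_def dest: Max_ge[OF finite_set_mset])
  show "inj_on ?f ?S"
  proof (rule inj_onI)
    fix x y
    assume x: "x \<in> ?S" and y: "y \<in> ?S" and eq: "?f x = ?f y"
    obtain D v E w where xy: "x = (D, v)" "y = (E, w)"
      by (cases x, cases y)
    have "v = Max_mset (D + replicate_mset m v)"
      using Max_add x xy by simp
    also have "\<dots> = Max_mset (E + replicate_mset m w)"
      using eq xy by simp
    also have "\<dots> = w"
      using Max_add y xy by simp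
    finally show "x = y"
      using eq xy by simp
  qed
  show "?f ` ?S = top_block_configs n m"
  proof
    show "?f ` ?S \<subseteq> top_block_configs n m"
      using add_top_block_mem_top_block_configs[OF assms(1), of _ "n - m"] assms(2) by auto
    show "top_block_configs n m \<subseteq> ?f ` ?S"
    proof
      fix D
      assume D: "D \<in> top_block_configs n m"
      then have "D = ?f ({#z \<in># D. z < Max_mset D#}, Max_mset D)"
        using split_top_block[of D] by (simp add: top_block_configs_def)
      moreover have "({#z \<in># D. z < Max_mset D#}, Max_mset D) \<in> ?S"
        using top_block_configs_decompose[OF D assms(2)] by simp
      ultimately show "D \<in> ?f ` ?S"
        by (rule image_eqI)
    qed
  qed
qed

lemma normal_period_configs_0: "normal_period_configs 0 = {}"
  by (auto simp: normal_period_configs_def)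

lemma top_block_configs_diag:
  assumes "1 \<le> n"
  shows "top_block_configs n n = {replicate_mset n 0}"
proof
  show "top_block_configs n n \<subseteq> {replicate_mset n 0}"
  proof
    fix D
    assume "D \<in> top_block_configs n n"
    then have D: "size D = n" "0 \<in># D" "top_count D = n"
      by (auto simp: top_block_configs_def normal_period_configs_def)
    define F where "F = {#z \<in># D. z < Max_mset D#}"
    have split: "D = F + replicate_mset n (Max_mset D)"
      using split_top_block[of D] D(3) by (simp add: F_def)
    have "size D = size F + n"
      by (subst split) simp
    then have "D = replicate_mset n (Max_mset D)"
      using split D(1) by simp
    moreover from this have "Max_mset D = 0"
      using D(2) by (metis in_replicate_mset)
    ultimately show "D \<in> {replicate_mset n 0}"
      by simp
  qed
  have "Max_mset (replicate_mset n (0::int)) = 0"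
    using assms by simp
  then show "{replicate_mset n 0} \<subseteq> top_block_configs n n"
    using assms
    by (auto simp: top_block_configs_def normal_period_configs_def fire_reverses_order_def top_count_def)
qed

lemma card_top_block_configs:
  assumes "1 \<le> m" "m \<le> n"
  shows "int (card (top_block_configs n m))
    = (if m = n then 1 else 0) + (\<Sum>D\<in>normal_period_configs (n - m). int (top_count D) + int m - 1)"
proof (cases "m = n")
  case True
  then show ?thesis
    using assms by (simp add: top_block_configs_diag normal_period_configs_0)
next
  case False
  then have "m < n"
    using assms(2) by simp
  have "card (top_block_configs n m) = card (SIGMA D:normal_period_configs (n - m). top_heights D m)"
    using bij_betw_same_card[OF bij_betw_top_block_configs[OF _ \<open>m < n\<close>]] assms(1) by simp
  also have "\<dots> = (\<Sum>D\<in>normal_period_configs (n - m). nat (int (top_count D) + int m - 1))"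
    by (subst card_SigmaI) (simp_all add: finite_normal_period_configs top_heights_def add_diff_eq)
  finally show ?thesis
    using False assms(1) by simp
qed

definition normal_count :: "nat \<Rightarrow> int" where
  "normal_count n = int (card (normal_period_configs n))"

definition top_count_total :: "nat \<Rightarrow> int" where
  "top_count_total n = (\<Sum>D\<in>normal_period_configs n. int (top_count D))"

lemma sum_normal_period_configs_top_count:
  fixes f :: "nat \<Rightarrow> int"
  assumes "1 \<le> n"
  shows "(\<Sum>D\<in>normal_period_configs n. f (top_count D))
    = f n + (\<Sum>m=1..n. f m * (top_count_total (n - m) + (int m - 1) * normal_count (n - m)))"
proof -
  have "(\<Sum>D\<in>normal_period_configs n. f (top_count D))
      = (\<Sum>m=1..n. \<Sum>D\<in>{D \<in> normal_period_configs n. top_count D = m}. f (top_count D))"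
    using top_count_bounds by (intro sum.group[symmetric]) (auto simp: finite_normal_period_configs)
  also have "\<dots> = (\<Sum>m=1..n. f m * int (card (top_block_configs n m)))"
    by (intro sum.cong) (simp_all add: top_block_configs_def)
  also have "\<dots> = (\<Sum>m=1..n. f m * ((if m = n then 1 else 0)
      + (top_count_total (n - m) + (int m - 1) * normal_count (n - m))))"
    by (intro sum.cong refl)
      (simp add: card_top_block_configs sum.distrib top_count_total_def normal_count_def
        sum_subtractf algebra_simps)
  also have "\<dots> = (\<Sum>m=1..n. if m = n then f m else 0)
      + (\<Sum>m=1..n. f m * (top_count_total (n - m) + (int m - 1) * normal_count (n - m)))"
    by (simp add: distrib_left sum.distrib if_distrib[of "\<lambda>x. f _ * x"] cong: if_cong)
  also have "\<dots> = f n + (\<Sum>m=1..n. f m * (top_count_total (n - m) + (int m - 1) * normal_count (n - m)))"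
    using assms by simp
  finally show ?thesis .
qed

lemma normal_count_rec:
  assumes "1 \<le> n"
  shows "normal_count n
    = 1 + (\<Sum>m=1..n. top_count_total (n - m) + (int m - 1) * normal_count (n - m))"
  using sum_normal_period_configs_top_count[OF assms, of "\<lambda>_. 1"] by (simp add: normal_count_def)

lemma top_count_total_rec:
  assumes "1 \<le> n"
  shows "top_count_total n
    = int n + (\<Sum>m=1..n. int m * (top_count_total (n - m) + (int m - 1) * normal_count (n - m)))"
  using sum_normal_period_configs_top_count[OF assms, of int] by (simp add: top_count_total_def)

section \<open>Generating functions\<close>

lemma fps_mult_nth_from_1:
  fixes f g :: "'a::comm_ring_1 fps"
  assumes "f $ 0 = 0"
  shows "(f * g) $ n = (\<Sum>m=1..n. f $ m * g $ (n - m))"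
  unfolding fps_mult_nth using assms by (simp add: sum.atLeast_Suc_atMost)

lemma fps_one_minus_X_mult_nth:
  fixes f :: "'a::comm_ring_1 fps"
  shows "((1 - fps_X) * f) $ n = f $ n - (if n = 0 then 0 else f $ (n - 1))"
  by (simp add: left_diff_distrib)

lemma convolution_system_fps:
  fixes a b :: "nat \<Rightarrow> int"
  assumes a0: "a 0 = 0" and b0: "b 0 = 0"
    and a_rec: "\<And>n. 1 \<le> n \<Longrightarrow> a n = 1 + (\<Sum>m=1..n. b (n - m) + (int m - 1) * a (n - m))"
    and b_rec: "\<And>n. 1 \<le> n \<Longrightarrow> b n = int n + (\<Sum>m=1..n. int m * (b (n - m) + (int m - 1) * a (n - m)))"
  defines "K1 \<equiv> Abs_fps (\<lambda>m. if m = 0 then 0 else 1 :: int)"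
    and "K2 \<equiv> Abs_fps (\<lambda>m. if m = 0 then 0 else int m - 1)"
    and "K3 \<equiv> Abs_fps (\<lambda>m. int m)"
    and "K4 \<equiv> Abs_fps (\<lambda>m. int m * (int m - 1))"
  shows "Abs_fps a = K1 + K1 * Abs_fps b + K2 * Abs_fps a"
    and "Abs_fps b = K3 + K3 * Abs_fps b + K4 * Abs_fps a"
proof (rule fps_ext)
  fix n
  show "Abs_fps a $ n = (K1 + K1 * Abs_fps b + K2 * Abs_fps a) $ n"
  proof (cases "n = 0")
    case False
    then show ?thesis
      using a_rec[of n] by (simp add: fps_mult_nth_from_1 K1_def K2_def sum.distrib)
  qed (simp add: K1_def K2_def a0)
next
  show "Abs_fps b = K3 + K3 * Abs_fps b + K4 * Abs_fps a"
  proof (rule fps_ext)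
    fix n
    show "Abs_fps b $ n = (K3 + K3 * Abs_fps b + K4 * Abs_fps a) $ n"
    proof (cases "n = 0")
      case False
      then show ?thesis
        using b_rec[of n]
        by (simp add: fps_mult_nth_from_1 K3_def K4_def sum.distrib distrib_left mult.assoc)
    qed (simp add: K3_def K4_def b0)
  qed
qed

lemma generating_function_of_convolution_system:
  fixes a b :: "nat \<Rightarrow> int"
  assumes "a 0 = 0" "b 0 = 0"
    and "\<And>n. 1 \<le> n \<Longrightarrow> a n = 1 + (\<Sum>m=1..n. b (n - m) + (int m - 1) * a (n - m))"
    and "\<And>n. 1 \<le> n \<Longrightarrow> b n = int n + (\<Sum>m=1..n. int m * (b (n - m) + (int m - 1) * a (n - m)))"
  shows "(1 - 5 * fps_X + 7 * fps_X^2 - 4 * fps_X^3) * Abs_fps a = fps_X * (1 - fps_X)^3"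
proof -
  define X :: "int fps" where "X = fps_X"
  define A where "A = Abs_fps a"
  define B where "B = Abs_fps b"
  define K1 :: "int fps" where "K1 = Abs_fps (\<lambda>m. if m = 0 then 0 else 1)"
  define K2 :: "int fps" where "K2 = Abs_fps (\<lambda>m. if m = 0 then 0 else int m - 1)"
  define K3 :: "int fps" where "K3 = Abs_fps (\<lambda>m. int m)"
  define K4 :: "int fps" where "K4 = Abs_fps (\<lambda>m. int m * (int m - 1))"
  have system: "A = K1 + K1 * B + K2 * A" "B = K3 + K3 * B + K4 * A"
    using convolution_system_fps[OF assms] by (simp_all add: A_def B_def K1_def K2_def K3_def K4_def)
  \<comment> \<open>K1 = X/(1-X), K2 = X^2/(1-X)^2, K3 = X/(1-X)^2 and K4 = 2X^2/(1-X)^3\<close>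
  have K1: "(1 - X) * K1 = X"
    by (rule fps_ext) (simp add: fps_one_minus_X_mult_nth X_def K1_def)
  have K2: "(1 - X) * K2 = X * K1"
    by (rule fps_ext) (simp add: fps_one_minus_X_mult_nth X_def K1_def K2_def)
  have K3: "(1 - X) * K3 = K1"
    by (rule fps_ext) (simp add: fps_one_minus_X_mult_nth X_def K1_def K3_def)
  have K4: "(1 - X) * K4 = 2 * K2"
  proof (rule fps_ext)
    fix n
    show "((1 - X) * K4) $ n = (2 * K2) $ n"
      by (cases n) (simp_all add: fps_one_minus_X_mult_nth X_def K4_def K2_def
          fps_numeral_fps_const algebra_simps)
  qed
  have "(1 - X)^2 * A = (1 - X) * ((1 - X) * K1) * (1 + B) + (1 - X) * ((1 - X) * K2) * A"
    by (subst system(1)) (simp add: power2_eq_square algebra_simps)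
  then have "(1 - X)^2 * A = X * (1 - X) + X * (1 - X) * B + X^2 * A"
    unfolding K2 mult.left_commute[of "1 - X" X] K1 by (simp add: power2_eq_square algebra_simps)
  moreover have "(1 - X)^3 * B = (1 - X) * ((1 - X) * ((1 - X) * K3)) * (1 + B)
      + (1 - X) * ((1 - X) * ((1 - X) * K4)) * A"
    by (subst system(2)) (simp add: power3_eq_cube algebra_simps)
  then have "(1 - X)^3 * B = X * (1 - X) + X * (1 - X) * B + 2 * X^2 * A"
    unfolding K3 K4 K1 mult.left_commute[of "1 - X" 2] K2 mult.left_commute[of "1 - X" X]
    by (simp add: power2_eq_square algebra_simps)
  \<comment> \<open>B is eliminated by adding (1 - 3X + X^2) times the first identity to X times the second\<close>
  ultimately have "(1 - 5 * X + 7 * X^2 - 4 * X^3) * A - X * (1 - X)^3 = 0"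
    by algebra
  then show ?thesis
    by (simp add: X_def A_def)
qed

lemma linear_recurrence_of_generating_function:
  fixes a :: "nat \<Rightarrow> int"
  assumes "(1 - 5 * fps_X + 7 * fps_X^2 - 4 * fps_X^3) * Abs_fps a = fps_X * (1 - fps_X)^3"
  shows "a 1 = 1 \<and> a 2 = 2 \<and> a 3 = 6 \<and> a 4 = 19
    \<and> (\<forall>n\<ge>5. a n = 5 * a (n - 1) - 7 * a (n - 2) + 4 * a (n - 3))"
proof -
  define A where "A = Abs_fps a"
  have eq: "A - fps_const 5 * (fps_X^1 * A) + fps_const 7 * (fps_X^2 * A) - fps_const 4 * (fps_X^3 * A)
      = fps_X^1 - fps_const 3 * fps_X^2 + fps_const 3 * fps_X^3 - fps_X^4"
    using assms unfolding A_def fps_numeral_fps_const[symmetric] by algebra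
  have coeff: "a n - 5 * (if n < 1 then 0 else a (n - 1)) + 7 * (if n < 2 then 0 else a (n - 2))
      - 4 * (if n < 3 then 0 else a (n - 3))
      = (if n = 1 then 1 else 0) - 3 * (if n = 2 then 1 else 0) + 3 * (if n = 3 then 1 else 0)
      - (if n = 4 then 1 else 0)" for n
    using arg_cong[OF eq, of "\<lambda>f. f $ n"]
    by (simp only: fps_sub_nth fps_add_nth fps_mult_left_const_nth fps_X_power_mult_nth fps_X_power_nth
        A_def fps_nth_Abs_fps)
  have "a 0 = 0"
    using coeff[of 0] by simp
  then have "a 1 = 1" "a 2 = 2"
    using coeff[of 1] coeff[of 2] by simp_all
  moreover from this have "a 3 = 6" "a 4 = 19"
    using coeff[of 3] coeff[of 4] \<open>a 0 = 0\<close> by (simp_all add: numeral_eq_Suc)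
  moreover have "a n = 5 * a (n - 1) - 7 * a (n - 2) + 4 * a (n - 3)" if "5 \<le> n" for n
    using coeff[of n] that by simp
  ultimately show ?thesis
    by blast
qed

theorem corollary4p3:
  shows "(\<forall>n\<ge>1. finite (pd_period_configs n // pd_equiv))
    \<and> pd_count 1 = 1 \<and> pd_count 2 = 2 \<and> pd_count 3 = 6 \<and> pd_count 4 = 19
    \<and> (\<forall>n\<ge>5. int (pd_count n) = 5 * int (pd_count (n - 1)) - 7 * int (pd_count (n - 2))
                                  + 4 * int (pd_count (n - 3)))"
proof -
  have counts: "normal_count 1 = 1 \<and> normal_count 2 = 2 \<and> normal_count 3 = 6 \<and> normal_count 4 = 19
      \<and> (\<forall>n\<ge>5. normal_count n
            = 5 * normal_count (n - 1) - 7 * normal_count (n - 2) + 4 * normal_count (n - 3))"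
    by (intro linear_recurrence_of_generating_function
        generating_function_of_convolution_system[of normal_count top_count_total]
        normal_count_rec top_count_total_rec)
      (simp_all add: normal_count_def top_count_total_def normal_period_configs_0)
  have pd_count: "int (pd_count n) = normal_count n" if "1 \<le> n" for n
    using pd_count_eq_card_normal[OF that] by (simp add: normal_count_def)
  have "int (pd_count 1) = 1" "int (pd_count 2) = 2" "int (pd_count 3) = 6" "int (pd_count 4) = 19"
    using counts pd_count[of 1] pd_count[of 2] pd_count[of 3] pd_count[of 4] by simp_all
  moreover have "int (pd_count n) = 5 * int (pd_count (n - 1)) - 7 * int (pd_count (n - 2))
      + 4 * int (pd_count (n - 3))" if "5 \<le> n" for n
    using counts that pd_count[of n] pd_count[of "n - 1"] pd_count[of "n - 2"] pd_count[of "n - 3"]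
    by simp
  ultimately show ?thesis
    using finite_pd_period_classes by simp
qed

end
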